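(* Let $\mathbb{F}$ be a field and $\mathcal{C} \subseteq \mathbb{F}^{m \times n}$ a linear code with $\dim(\mathcal{C}) = mk$ for a positive integer $k$. The following are equivalent: (1) there exists a subspace $\mathcal{L} \subseteq \mathbb{F}^n$ with $\mathcal{C} = \mathcal{V}_\mathcal{L}$; (2) $d_{M,km}(\mathcal{C}) = k$; (3) $d_{M,r}(\mathcal{C}) = \lceil r/m \rceil$ for all $1 \leq r \leq mk$.
   Context: ${\rm Row}(V)$ is the row space. For a subspace $\mathcal{L} \subseteq \mathbb{F}^n$, $\mathcal{V}_\mathcal{L} = \{V \in \mathbb{F}^{m\times n} \mid {\rm Row}(V) \subseteq \mathcal{L}\}$, and $d_{M,r}(\mathcal{C}) = \min\{\dim \mathcal{L} \mid \mathcal{L} \subseteq \mathbb{F}^n \text{ subspace}, \dim(\mathcal{C} \cap \mathcal{V}_\mathcal{L}) \ge r\}$. *)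

theory Defs
  imports "HOL-Analysis.Analysis"
begin

text \<open>Matrices in F^(m x n) are rendered as 'a^'n^'m (rows indexed by 'm, columns by 'n),
  with m = CARD('m), n = CARD('n). Scalar multiplication on matrices is entrywise.\<close>

definition mscale :: "'a::field \<Rightarrow> 'a^'n^'m \<Rightarrow> 'a^'n^'m" where
  "mscale c A = (\<chi> i. c *s (A $ i))"

interpretation mat: vector_space "mscale :: 'a::field \<Rightarrow> 'a^'n^'m \<Rightarrow> 'a^'n^'m"
  by unfold_locales (auto simp: mscale_def vec_eq_iff algebra_simps)

definition Row :: "'a::field^'n^'m \<Rightarrow> ('a^'n) set" where
  "Row V = vec.span (range (\<lambda>i. V $ i))"

definition VL :: "('a::field^'n) set \<Rightarrow> ('a^'n^'m) set" where
  "VL L = {V. Row V \<subseteq> L}"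

definition dM :: "nat \<Rightarrow> ('a::field^'n^'m) set \<Rightarrow> nat" where
  "dM r C = (LEAST d. \<exists>L. vec.subspace L \<and> vec.dim L = d \<and> mat.dim (C \<inter> VL L) \<ge> r)"

end

theory Submission imports Defs begin

text \<open>
  \<open>V\<^sub>L\<close> is spanned by the matrices with a single nonzero row taken from a basis of \<open>L\<close>,
  so \<open>dim V\<^sub>L = m \<cdot> dim L\<close>. Consequently \<open>dim (C \<inter> V\<^sub>L) \<le> m \<cdot> dim L\<close>, i.e.
  \<open>d\<^sub>M\<^sub>,\<^sub>r(C) \<ge> \<lceil>r/m\<rceil>\<close>, with equality for \<open>C = V\<^sub>L\<close> by taking subspaces of \<open>L\<close>.
  Conversely, if \<open>d\<^sub>M\<^sub>,\<^sub>m\<^sub>k(C) = k\<close> is attained by \<open>L\<close>, then \<open>C \<inter> V\<^sub>L\<close> has dimension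
  \<open>mk = dim C = dim V\<^sub>L\<close>, forcing \<open>C = C \<inter> V\<^sub>L = V\<^sub>L\<close>.
\<close>

definition single_row :: "'m \<Rightarrow> 'a::field^'n \<Rightarrow> 'a^'n^'m" where
  "single_row i b = (\<chi> i'. if i' = i then b else 0)"

definition single_rows :: "('a::field^'n) set \<Rightarrow> ('a^'n^'m) set" where
  "single_rows B = (\<lambda>(i, b). single_row i b) ` (UNIV \<times> B)"

lemma module_hom_single_row:
  "module_hom (*s) mscale (single_row i :: 'a::field^'n \<Rightarrow> 'a^'n^'m)"
  by unfold_locales (auto simp: single_row_def mscale_def vec_eq_iff)

lemma matrix_eq_sum_single_rows: "(V :: 'a::field^'n^'m) = (\<Sum>i\<in>UNIV. single_row i (V $ i))"
  by (simp add: vec_eq_iff single_row_def)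

lemma single_row_inject:
  assumes "b \<noteq> 0" "single_row i b = single_row i' b'"
  shows "i = i' \<and> b = b'"
proof -
  have "single_row i b $ i = single_row i' b' $ i" using assms by simp
  then have "b = (if i = i' then b' else 0)" by (simp add: single_row_def)
  then show ?thesis using assms(1) by (auto split: if_splits)
qed

lemma inj_on_single_rows:
  assumes "vec.independent B"
  shows "inj_on (\<lambda>(i, b). single_row i b :: 'a::field^'n^'m) (UNIV \<times> B)"
proof -
  have "0 \<notin> B" using assms vec.dependent_zero by blast
  then show ?thesis unfolding inj_on_def by clarsimp (metis single_row_inject)
qed

lemma card_single_rows:
  assumes "vec.independent B"
  shows "card (single_rows B :: ('a::field^'n^'m) set) = CARD('m) * card B"
  unfolding single_rows_def using card_image[OF inj_on_single_rows[OF assms]]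
  by (simp add: card_cartesian_product)

lemma finite_single_rows: "vec.independent B \<Longrightarrow> finite (single_rows B)"
  unfolding single_rows_def by (simp add: vec.finiteI_independent)

lemma independent_single_rows:
  assumes "vec.independent B"
  shows "mat.independent (single_rows B :: ('a::field^'n^'m) set)"
proof (rule mat.independent_if_scalars_zero[OF finite_single_rows[OF assms]])
  fix f :: "'a^'n^'m \<Rightarrow> 'a" and x :: "'a^'n^'m"
  assume zero: "(\<Sum>x\<in>single_rows B. mscale (f x) x) = 0" and x: "x \<in> single_rows B"
  from x obtain i0 b0 where b0: "b0 \<in> B" and x_eq: "x = single_row i0 b0"
    unfolding single_rows_def by auto
  have "(\<Sum>x\<in>single_rows B. mscale (f x) x)
      = (\<Sum>(i, b)\<in>UNIV \<times> B. mscale (f (single_row i b)) (single_row i b))"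
    unfolding single_rows_def
    by (subst sum.reindex[OF inj_on_single_rows[OF assms]]) (simp add: comp_def case_prod_unfold)
  also have "\<dots> = (\<Sum>i\<in>UNIV. \<Sum>b\<in>B. mscale (f (single_row i b)) (single_row i b))"
    by (rule sum.cartesian_product[symmetric])
  finally have "(\<Sum>i\<in>UNIV. \<Sum>b\<in>B. mscale (f (single_row i b)) (single_row i b)) $ i0 = 0"
    using zero by simp
  then have "(\<Sum>i\<in>UNIV. \<Sum>b\<in>B. if i0 = i then f (single_row i b) *s b else 0) = 0"
    by (simp add: mscale_def single_row_def if_distrib cong: if_cong)
  also have "(\<Sum>i\<in>UNIV. \<Sum>b\<in>B. if i0 = i then f (single_row i b) *s b else 0)
      = (\<Sum>i\<in>UNIV. if i0 = i then (\<Sum>b\<in>B. f (single_row i b) *s b) else 0)"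
    by (intro sum.cong) auto
  finally have row_i0: "(\<Sum>b\<in>B. f (single_row i0 b) *s b) = 0"
    by simp
  from assms have "\<forall>c. (\<Sum>v\<in>B. c v *s v) = 0 \<longrightarrow> (\<forall>v\<in>B. c v = 0)"
    by (simp add: vec.independent_explicit)
  then show "f x = 0"
    using row_i0 b0 x_eq by (auto dest: spec[of _ "\<lambda>b. f (single_row i0 b)"])
qed

lemma mem_VL_iff:
  assumes "vec.subspace L"
  shows "V \<in> VL L \<longleftrightarrow> (\<forall>i. V $ i \<in> L)"
proof
  assume "V \<in> VL L"
  then show "\<forall>i. V $ i \<in> L" unfolding VL_def Row_def using vec.span_superset by blast
next
  assume "\<forall>i. V $ i \<in> L"
  then show "V \<in> VL L" unfolding VL_def Row_def using vec.span_minimal[OF _ assms] by blast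
qed

lemma subspace_VL: "vec.subspace L \<Longrightarrow> mat.subspace (VL L :: ('a::field^'n^'m) set)"
  unfolding mat.subspace_def
  by (auto simp: mem_VL_iff mscale_def vec.subspace_0 vec.subspace_add vec.subspace_scale)

lemma VL_mono: "L \<subseteq> L' \<Longrightarrow> VL L \<subseteq> VL L'"
  by (auto simp: VL_def)

lemma VL_UNIV: "VL UNIV = UNIV"
  by (auto simp: VL_def)

lemma single_rows_subset_VL:
  "vec.subspace L \<Longrightarrow> B \<subseteq> L \<Longrightarrow> single_rows B \<subseteq> (VL L :: ('a::field^'n^'m) set)"
  unfolding single_rows_def by (auto simp: mem_VL_iff single_row_def vec.subspace_0)

lemma VL_subset_span_single_rows:
  assumes "vec.subspace L" "L \<subseteq> vec.span B"
  shows "VL L \<subseteq> mat.span (single_rows B :: ('a::field^'n^'m) set)"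
proof
  fix V :: "'a^'n^'m" assume V: "V \<in> VL L"
  have "single_row i (V $ i) \<in> mat.span (single_rows B)" for i
  proof -
    have "V $ i \<in> vec.span B" using V assms by (auto simp: mem_VL_iff)
    then have "single_row i (V $ i) \<in> mat.span (single_row i ` B)"
      using module_hom.span_image[OF module_hom_single_row, of i B] by auto
    moreover have "single_row i ` B \<subseteq> single_rows B" unfolding single_rows_def by auto
    ultimately show ?thesis using mat.span_mono by blast
  qed
  then have "(\<Sum>i\<in>UNIV. single_row i (V $ i)) \<in> mat.span (single_rows B)"
    by (intro mat.span_sum) auto
  then show "V \<in> mat.span (single_rows B)" using matrix_eq_sum_single_rows[of V] by simp
qed

lemma dim_VL:
  assumes "vec.subspace L"
  shows "mat.dim (VL L :: ('a::field^'n^'m) set) = CARD('m) * vec.dim L"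
proof -
  obtain B where B: "B \<subseteq> L" "vec.independent B" "L \<subseteq> vec.span B" "card B = vec.dim L"
    using vec.basis_exists[of L] by blast
  show ?thesis
    by (rule mat.dim_unique[OF single_rows_subset_VL[OF assms B(1)]
          VL_subset_span_single_rows[OF assms B(3)] independent_single_rows[OF B(2)]])
       (simp add: card_single_rows[OF B(2)] B(4))
qed

interpretation mat: finite_dimensional_vector_space
  "mscale :: 'a::field \<Rightarrow> 'a^'n^'m \<Rightarrow> 'a^'n^'m" "single_rows cart_basis"
proof unfold_locales
  show "finite (single_rows cart_basis :: ('a^'n^'m) set)"
    by (rule finite_single_rows[OF independent_cart_basis])
  show "mat.independent (single_rows cart_basis :: ('a^'n^'m) set)"
    by (rule independent_single_rows[OF independent_cart_basis])
  have "VL UNIV \<subseteq> mat.span (single_rows cart_basis :: ('a^'n^'m) set)"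
    by (rule VL_subset_span_single_rows) auto
  then show "mat.span (single_rows cart_basis :: ('a^'n^'m) set) = UNIV"
    by (auto simp: VL_UNIV)
qed

lemma dim_inter_VL_le:
  fixes C :: "('a::field^'n^'m) set"
  assumes "vec.subspace L"
  shows "mat.dim (C \<inter> VL L) \<le> CARD('m) * vec.dim L"
  using mat.dim_subset[of "C \<inter> VL L" "VL L"] dim_VL[OF assms, where 'm='m] by simp

lemma dM_attained:
  fixes C :: "('a::field^'n^'m) set"
  assumes "r \<le> mat.dim C"
  shows "\<exists>L. vec.subspace L \<and> vec.dim L = dM r C \<and> r \<le> mat.dim (C \<inter> VL L)"
  unfolding dM_def
proof (rule LeastI_ex)
  show "\<exists>d L. vec.subspace L \<and> vec.dim L = d \<and> r \<le> mat.dim (C \<inter> VL L)"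
    by (intro exI[of _ "vec.dim UNIV"] exI[of _ UNIV]) (simp add: assms VL_UNIV)
qed

lemma dM_le:
  "vec.subspace L \<Longrightarrow> r \<le> mat.dim (C \<inter> VL L) \<Longrightarrow> dM r C \<le> vec.dim L"
  unfolding dM_def by (rule Least_le) blast

lemma dM_lower_bound:
  fixes C :: "('a::field^'n^'m) set"
  assumes "r \<le> mat.dim C"
  shows "r \<le> CARD('m) * dM r C"
proof -
  obtain L where "vec.subspace L" "vec.dim L = dM r C" "r \<le> mat.dim (C \<inter> VL L)"
    using dM_attained[OF assms] by blast
  then show ?thesis using dim_inter_VL_le[of L C] by simp
qed

lemma nat_ceiling_divide_le_iff:
  assumes "m > 0"
  shows "nat \<lceil>real r / real m\<rceil> \<le> d \<longleftrightarrow> r \<le> m * d"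
proof -
  have "nat \<lceil>real r / real m\<rceil> \<le> d \<longleftrightarrow> real r / real m \<le> real d"
    by (simp add: nat_le_iff ceiling_le_iff)
  also have "\<dots> \<longleftrightarrow> real r \<le> real (m * d)"
    using assms by (simp add: divide_le_eq mult.commute)
  finally show ?thesis by (simp only: of_nat_le_iff)
qed

lemma dM_VL:
  fixes L :: "('a::field^'n) set"
  assumes L: "vec.subspace L" and r: "r \<le> CARD('m) * vec.dim L"
  shows "dM r (VL L :: ('a^'n^'m) set) = nat \<lceil>real r / real CARD('m)\<rceil>"
    (is "_ = ?c")
proof (rule antisym)
  have "?c \<le> vec.dim L" using r nat_ceiling_divide_le_iff[of "CARD('m)" r] by simp
  then obtain T where T: "vec.subspace T" "T \<subseteq> vec.span L" "vec.dim T = ?c"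
    using vec.choose_subspace_of_subspace by blast
  have "T \<subseteq> L" using T(2) L vec.span_eq_iff by blast
  then have "VL T \<subseteq> (VL L :: ('a^'n^'m) set)" by (rule VL_mono)
  then have "mat.dim (VL L \<inter> VL T :: ('a^'n^'m) set) = CARD('m) * ?c"
    using dim_VL[OF T(1)] T(3) by (simp add: Int_absorb1)
  moreover have "r \<le> CARD('m) * ?c"
    using nat_ceiling_divide_le_iff[of "CARD('m)" r ?c] by simp
  ultimately have "r \<le> mat.dim (VL L \<inter> VL T :: ('a^'n^'m) set)" by simp
  from dM_le[OF T(1) this] T(3) show "dM r (VL L :: ('a^'n^'m) set) \<le> ?c" by simp
  have "r \<le> CARD('m) * dM r (VL L :: ('a^'n^'m) set)"
    using dM_lower_bound[of r "VL L :: ('a^'n^'m) set"] r dim_VL[OF L, where 'm='m] by simp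
  then show "?c \<le> dM r (VL L :: ('a^'n^'m) set)"
    using nat_ceiling_divide_le_iff[of "CARD('m)" r] by simp
qed

lemma eq_VL_if_dM_eq:
  fixes C :: "('a::field^'n^'m) set"
  assumes C: "mat.subspace C" "mat.dim C = CARD('m) * k"
    and dM: "dM (CARD('m) * k) C = k"
  shows "\<exists>L. vec.subspace L \<and> C = VL L"
proof -
  obtain L where L: "vec.subspace L" "vec.dim L = k" "CARD('m) * k \<le> mat.dim (C \<inter> VL L)"
    using dM_attained[of "CARD('m) * k" C] C(2) dM by auto
  have sub: "mat.subspace (C \<inter> VL L)"
    using C(1) subspace_VL[OF L(1)] by (rule mat.subspace_inter)
  have "C \<inter> VL L = C"
    by (rule mat.subspace_dim_equal[OF sub C(1)]) (use L(3) C(2) in auto)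
  moreover have "C \<inter> VL L = VL L"
    by (rule mat.subspace_dim_equal[OF sub subspace_VL[OF L(1)]])
       (use L dim_VL[OF L(1), where 'm='m] in auto)
  ultimately show ?thesis using L(1) by auto
qed

theorem proposition16:
  fixes C :: "('a::field^'n^'m) set" and k :: nat
  assumes "k > 0"
    and "mat.subspace C"
    and "mat.dim C = CARD('m) * k"
  shows "((\<exists>L. vec.subspace L \<and> C = VL L) \<longleftrightarrow> dM (k * CARD('m)) C = k)
       \<and> (dM (k * CARD('m)) C = k \<longleftrightarrow>
          (\<forall>r. 1 \<le> r \<and> r \<le> CARD('m) * k \<longrightarrow> dM r C = nat \<lceil>real r / real CARD('m)\<rceil>))"
proof -
  let ?m = "CARD('m)"
  have one_to_three: "dM r C = nat \<lceil>real r / real ?m\<rceil>"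
    if "vec.subspace L" "C = VL L" "r \<le> ?m * k" for L r
  proof -
    have "vec.dim L = k" using assms(3) dim_VL[OF that(1), where 'm='m] that(2) by simp
    then show ?thesis using dM_VL[OF that(1)] that by simp
  qed
  have three_to_two: "dM (k * ?m) C = k"
    if "\<forall>r. 1 \<le> r \<and> r \<le> ?m * k \<longrightarrow> dM r C = nat \<lceil>real r / real ?m\<rceil>"
    using that[rule_format, of "?m * k"] assms(1) by (simp add: mult.commute)
  have two_to_one: "\<exists>L. vec.subspace L \<and> C = VL L" if "dM (k * ?m) C = k"
    using eq_VL_if_dM_eq[OF assms(2,3)] that by (simp add: mult.commute)
  show ?thesis using one_to_three three_to_two two_to_one by blast
qed

end
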